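(* A pseudovariety of semigroupoids $\mathsf V$ is equidivisible if and only if $\overline{\Omega}_A\mathsf V$ is equidivisible for every finite-vertex graph $A$.
   Context: A semigroupoid is a graph (vertices, edges, source/range maps $\alpha,\omega$) with associative partial multiplication $st$ defined iff $\alpha(s)=\omega(t)$; $S^I$ is $S$ with a local identity adjoined at each vertex. $S$ is equidivisible if whenever $uv=xy$ for edges $u,v,x,y$, there is $t\in E(S^I)$ with either ($ut=x$ and $v=ty$) or ($xt=u$ and $y=tv$). A pseudovariety of semigroupoids (class of finite semigroupoids closed under divisors, finite direct products, finite coproducts) $\mathsf V$ is equidivisible if the free pro-$\mathsf V$ semigroupoid $\overline{\Omega}_A\mathsf V$ is equidivisible for every finite graph $A$ (finitely many vertices and edges). Finite-vertex graphs may have infinitely many edges. *)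

theory Defs
  imports Main
begin

text \<open>A semigroupoid additionally has a partial multiplication: mult s t is the
  product st, defined iff alpha s = omega t (outside that domain mult is irrelevant).\<close>

record ('v, 'e) graph =
  verts :: "'v set"
  edges :: "'e set"
  alpha :: "'e \<Rightarrow> 'v"
  omega :: "'e \<Rightarrow> 'v"

record ('v, 'e) sgd = "('v, 'e) graph" +
  mult :: "'e \<Rightarrow> 'e \<Rightarrow> 'e"

definition is_graph :: "('v, 'e, 'm) graph_scheme \<Rightarrow> bool" where
  "is_graph A \<longleftrightarrow> (\<forall>e\<in>edges A. alpha A e \<in> verts A \<and> omega A e \<in> verts A)"

definition is_sgd :: "('v, 'e) sgd \<Rightarrow> bool" where
  "is_sgd S \<longleftrightarrow> is_graph S
     \<and> (\<forall>s\<in>edges S. \<forall>t\<in>edges S. alpha S s = omega S t \<longrightarrow>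
          mult S s t \<in> edges S \<and> alpha S (mult S s t) = alpha S t
          \<and> omega S (mult S s t) = omega S s)
     \<and> (\<forall>s\<in>edges S. \<forall>t\<in>edges S. \<forall>u\<in>edges S.
          alpha S s = omega S t \<longrightarrow> alpha S t = omega S u \<longrightarrow>
          mult S (mult S s t) u = mult S s (mult S t u))"

definition finite_sgd :: "('v, 'e) sgd \<Rightarrow> bool" where
  "finite_sgd S \<longleftrightarrow> is_sgd S \<and> finite (verts S) \<and> finite (edges S)"

definition graph_hom :: "('v, 'e, 'm) graph_scheme \<Rightarrow> ('w, 'f, 'n) graph_scheme
     \<Rightarrow> ('v \<Rightarrow> 'w) \<Rightarrow> ('e \<Rightarrow> 'f) \<Rightarrow> bool" where
  "graph_hom A T f g \<longleftrightarrow>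
     (\<forall>v\<in>verts A. f v \<in> verts T)
   \<and> (\<forall>e\<in>edges A. g e \<in> edges T \<and> alpha T (g e) = f (alpha A e)
                   \<and> omega T (g e) = f (omega A e))"

definition sgd_hom :: "('v, 'e) sgd \<Rightarrow> ('w, 'f) sgd
     \<Rightarrow> ('v \<Rightarrow> 'w) \<Rightarrow> ('e \<Rightarrow> 'f) \<Rightarrow> bool" where
  "sgd_hom S T f g \<longleftrightarrow> graph_hom S T f g
     \<and> (\<forall>s\<in>edges S. \<forall>t\<in>edges S. alpha S s = omega S t \<longrightarrow>
          g (mult S s t) = mult T (g s) (g t))"

definition sgd_iso :: "('v, 'e) sgd \<Rightarrow> ('w, 'f) sgd \<Rightarrow> bool" where
  "sgd_iso S T \<longleftrightarrow> (\<exists>f g. sgd_hom S T f g \<and> bij_betw f (verts S) (verts T)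
                          \<and> bij_betw g (edges S) (edges T))"

definition divides :: "('v, 'e) sgd \<Rightarrow> ('w, 'f) sgd \<Rightarrow> bool" where
  "divides S T \<longleftrightarrow> (\<exists>(nu :: 'v \<Rightarrow> 'w) (R :: 'e \<Rightarrow> 'f set).
      (\<forall>v\<in>verts S. nu v \<in> verts T)
    \<and> (\<forall>s\<in>edges S. R s \<noteq> {} \<and> R s \<subseteq> edges T
          \<and> (\<forall>t\<in>R s. alpha T t = nu (alpha S s) \<and> omega T t = nu (omega S s)))
    \<and> (\<forall>s\<in>edges S. \<forall>s'\<in>edges S. alpha S s = omega S s' \<longrightarrow>
          (\<forall>t\<in>R s. \<forall>t'\<in>R s'. mult T t t' \<in> R (mult S s s')))
    \<and> (\<forall>s\<in>edges S. \<forall>s'\<in>edges S. alpha S s = alpha S s' \<and> omega S s = omega S s'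
          \<and> R s \<inter> R s' \<noteq> {} \<longrightarrow> s = s'))"

definition sgd_prod :: "('v, 'e) sgd \<Rightarrow> ('w, 'f) sgd \<Rightarrow> ('v \<times> 'w, 'e \<times> 'f) sgd" where
  "sgd_prod S T = \<lparr> verts = verts S \<times> verts T, edges = edges S \<times> edges T,
     alpha = (\<lambda>(s, t). (alpha S s, alpha T t)),
     omega = (\<lambda>(s, t). (omega S s, omega T t)),
     mult = (\<lambda>(s, t) (s', t'). (mult S s s', mult T t t')) \<rparr>"

definition sgd_coprod :: "('v, 'e) sgd \<Rightarrow> ('w, 'f) sgd \<Rightarrow> ('v + 'w, 'e + 'f) sgd" where
  "sgd_coprod S T = \<lparr> verts = Inl ` verts S \<union> Inr ` verts T,
     edges = Inl ` edges S \<union> Inr ` edges T,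
     alpha = (\<lambda>x. case x of Inl s \<Rightarrow> Inl (alpha S s) | Inr t \<Rightarrow> Inr (alpha T t)),
     omega = (\<lambda>x. case x of Inl s \<Rightarrow> Inl (omega S s) | Inr t \<Rightarrow> Inr (omega T t)),
     mult = (\<lambda>x y. case (x, y) of (Inl s, Inl s') \<Rightarrow> Inl (mult S s s')
                               | (Inr t, Inr t') \<Rightarrow> Inr (mult T t t')
                               | _ \<Rightarrow> undefined) \<rparr>"

text \<open>Empty product (trivial semigroupoid) and empty coproduct (empty semigroupoid).\<close>
definition sgd_trivial :: "(unit, unit) sgd" where
  "sgd_trivial = \<lparr> verts = {()}, edges = {()}, alpha = (\<lambda>_. ()), omega = (\<lambda>_. ()),
                   mult = (\<lambda>_ _. ()) \<rparr>"

definition sgd_empty :: "(unit, unit) sgd" where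
  "sgd_empty = \<lparr> verts = {}, edges = {}, alpha = (\<lambda>_. ()), omega = (\<lambda>_. ()),
                 mult = (\<lambda>_ _. ()) \<rparr>"

text \<open>Every finite semigroupoid is isomorphic to one whose vertices and edges are
  natural numbers, so a pseudovariety is represented by the class of its members
  carried by nat, closed under isomorphic copies (a consequence of division closure).\<close>
definition pseudovariety :: "(nat, nat) sgd set \<Rightarrow> bool" where
  "pseudovariety V \<longleftrightarrow>
     (\<forall>S\<in>V. finite_sgd S)
   \<and> (\<forall>T\<in>V. \<forall>S :: (nat, nat) sgd. finite_sgd S \<and> divides S T \<longrightarrow> S \<in> V)
   \<and> (\<forall>S\<in>V. \<forall>T\<in>V. \<exists>P\<in>V. sgd_iso P (sgd_prod S T))
   \<and> (\<exists>P\<in>V. sgd_iso P sgd_trivial)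
   \<and> (\<forall>S\<in>V. \<forall>T\<in>V. \<exists>P\<in>V. sgd_iso P (sgd_coprod S T))
   \<and> (\<exists>P\<in>V. sgd_iso P sgd_empty)"

text \<open>S^I: S with a local identity adjoined at each vertex (Inr q is the identity at q).\<close>
definition sgdI :: "('v, 'e) sgd \<Rightarrow> ('v, 'e + 'v) sgd" where
  "sgdI S = \<lparr> verts = verts S, edges = Inl ` edges S \<union> Inr ` verts S,
     alpha = (\<lambda>x. case x of Inl e \<Rightarrow> alpha S e | Inr q \<Rightarrow> q),
     omega = (\<lambda>x. case x of Inl e \<Rightarrow> omega S e | Inr q \<Rightarrow> q),
     mult = (\<lambda>x y. case (x, y) of (Inl s, Inl t) \<Rightarrow> Inl (mult S s t)
                               | (Inr _, _) \<Rightarrow> y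
                               | (Inl _, Inr _) \<Rightarrow> x) \<rparr>"

definition equidivisible :: "('v, 'e) sgd \<Rightarrow> bool" where
  "equidivisible S \<longleftrightarrow>
    (\<forall>u\<in>edges S. \<forall>v\<in>edges S. \<forall>x\<in>edges S. \<forall>y\<in>edges S.
       alpha S u = omega S v \<longrightarrow> alpha S x = omega S y \<longrightarrow>
       mult S u v = mult S x y \<longrightarrow>
       (\<exists>t\<in>edges (sgdI S).
          (alpha (sgdI S) (Inl u) = omega (sgdI S) t \<and> mult (sgdI S) (Inl u) t = Inl x
            \<and> alpha (sgdI S) t = omega (sgdI S) (Inl y) \<and> Inl v = mult (sgdI S) t (Inl y))
        \<or> (alpha (sgdI S) (Inl x) = omega (sgdI S) t \<and> mult (sgdI S) (Inl x) t = Inl u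
            \<and> alpha (sgdI S) t = omega (sgdI S) (Inl v) \<and> Inl y = mult (sgdI S) t (Inl v))))"

text \<open>Index objects: pairs (T, phi) with T in V and phi a graph morphism A -> T.
  The free pro-V semigroupoid over A is the projective limit of this (cofiltered)
  system, i.e. the families of vertices/edges compatible with every semigroupoid
  morphism h: T -> T' satisfying h o phi = phi' on A.\<close>

type_synonym ('v, 'e) idx = "(nat, nat) sgd \<times> ('v \<Rightarrow> nat) \<times> ('e \<Rightarrow> nat)"

definition pv_index :: "(nat, nat) sgd set \<Rightarrow> ('v, 'e) graph \<Rightarrow> ('v, 'e) idx set" where
  "pv_index V A = {(T, f, g). T \<in> V \<and> graph_hom A T f g}"

definition compatible :: "('v, 'e) graph \<Rightarrow> ('v, 'e) idx \<Rightarrow> ('v, 'e) idx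
     \<Rightarrow> (nat \<Rightarrow> nat) \<Rightarrow> (nat \<Rightarrow> nat) \<Rightarrow> bool" where
  "compatible A i j h k \<longleftrightarrow> (case i of (T, f, g) \<Rightarrow> case j of (T', f', g') \<Rightarrow>
      sgd_hom T T' h k \<and> (\<forall>v\<in>verts A. h (f v) = f' v) \<and> (\<forall>e\<in>edges A. k (g e) = g' e))"

definition lim_verts :: "(nat, nat) sgd set \<Rightarrow> ('v, 'e) graph \<Rightarrow> (('v, 'e) idx \<Rightarrow> nat) set" where
  "lim_verts V A = {w. (\<forall>i. i \<notin> pv_index V A \<longrightarrow> w i = undefined)
     \<and> (\<forall>i\<in>pv_index V A. w i \<in> verts (fst i))
     \<and> (\<forall>i\<in>pv_index V A. \<forall>j\<in>pv_index V A. \<forall>h k. compatible A i j h k \<longrightarrow> h (w i) = w j)}"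

definition lim_edges :: "(nat, nat) sgd set \<Rightarrow> ('v, 'e) graph \<Rightarrow> (('v, 'e) idx \<Rightarrow> nat) set" where
  "lim_edges V A = {w. (\<forall>i. i \<notin> pv_index V A \<longrightarrow> w i = undefined)
     \<and> (\<forall>i\<in>pv_index V A. w i \<in> edges (fst i))
     \<and> (\<forall>i\<in>pv_index V A. \<forall>j\<in>pv_index V A. \<forall>h k. compatible A i j h k \<longrightarrow> k (w i) = w j)}"

definition free_pro :: "(nat, nat) sgd set \<Rightarrow> ('v, 'e) graph
     \<Rightarrow> (('v, 'e) idx \<Rightarrow> nat, ('v, 'e) idx \<Rightarrow> nat) sgd" where
  "free_pro V A = \<lparr> verts = lim_verts V A, edges = lim_edges V A,
     alpha = (\<lambda>w i. if i \<in> pv_index V A then alpha (fst i) (w i) else undefined),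
     omega = (\<lambda>w i. if i \<in> pv_index V A then omega (fst i) (w i) else undefined),
     mult = (\<lambda>w w' i. if i \<in> pv_index V A then mult (fst i) (w i) (w' i) else undefined) \<rparr>"

text \<open>A pseudovariety is equidivisible if the free pro-V semigroupoid over every finite
  graph is equidivisible (finite graphs are taken, up to isomorphism, on nat).\<close>
definition equidivisible_pv :: "(nat, nat) sgd set \<Rightarrow> bool" where
  "equidivisible_pv V \<longleftrightarrow>
     (\<forall>A :: (nat, nat) graph. is_graph A \<and> finite (verts A) \<and> finite (edges A)
        \<longrightarrow> equidivisible (free_pro V A))"

end

theory Submission
  imports Defs "HOL-Analysis.Function_Topology" "HOL-Analysis.Product_Topology"
begin

text \<open>An equation \<open>uv = xy\<close> between edges of the projective limit \<open>free_pro V A\<close> is a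
  compatible family of equations in the finite semigroupoids of \<open>V\<close>, and a factorisation
  witness \<open>t\<close> (\<open>ut = x\<close>, \<open>v = ty\<close>) is a compatible family of local witnesses, i.e. a solution
  of a system of unary and binary constraints with finite domains. By Tychonoff such a system is
  solvable once all its finite subsystems are; since each of the three possible outcomes
  (\<open>u = x\<close> and \<open>v = y\<close>, or a witness in one of the two directions) passes to subsystems, one
  of them holds for all finite subsystems simultaneously.

  Using products in \<open>V\<close>, finitely many indices are refined by a single index \<open>(P, f, g)\<close>, so
  they factor through the image of \<open>A\<close> in \<open>P\<close>. That image is a finite graph, and the
  equidivisibility of its free pro-\<open>V\<close> semigroupoid solves the finite subsystem; hence the
  forward implication holds for every graph \<open>A\<close>. Conversely, a finite graph has an isomorphic
  copy on the infinite carriers \<open>'v\<close> and \<open>'e\<close>, and the same argument transfers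
  equidivisibility along graph isomorphisms.\<close>

definition csp_solution :: "'i set \<Rightarrow> ('i \<Rightarrow> 'a \<Rightarrow> bool) \<Rightarrow> ('i \<Rightarrow> 'i \<Rightarrow> 'a \<Rightarrow> 'a \<Rightarrow> bool)
     \<Rightarrow> ('i \<Rightarrow> 'a) \<Rightarrow> bool" where
  "csp_solution G P R w \<longleftrightarrow> (\<forall>i\<in>G. P i (w i)) \<and> (\<forall>i\<in>G. \<forall>j\<in>G. R i j (w i) (w j))"

lemma closedin_pairwise_constraints:
  assumes "G \<subseteq> I"
  shows "closedin (product_topology (\<lambda>i. discrete_topology (E i)) I)
    {w \<in> topspace (product_topology (\<lambda>i. discrete_topology (E i)) I). \<forall>i\<in>G. \<forall>j\<in>G. R i j (w i) (w j)}"
    (is "closedin ?X ?C")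
proof -
  define K where "K = (\<lambda>(i, j). {w \<in> topspace ?X. (w i, w j) \<in> {(s, t) \<in> E i \<times> E j. R i j s t}})"
  have closed_K: "closedin ?X (K (i, j))" if "i \<in> I" "j \<in> I" for i j
    unfolding K_def prod.case
  proof (rule closedin_continuous_map_preimage)
    show "continuous_map ?X (discrete_topology (E i \<times> E j)) (\<lambda>w. (w i, w j))"
      unfolding prod_topology_discrete_topology using that
      by (intro continuous_map_pairedI continuous_map_product_projection)
  qed auto
  have "closedin ?X (\<Inter>(insert (topspace ?X) (K ` (G \<times> G))))"
  proof (rule closedin_Inter)
    fix S assume "S \<in> insert (topspace ?X) (K ` (G \<times> G))"
    then show "closedin ?X S"
      using closed_K assms closedin_topspace by blast
  qed simp
  moreover have "?C = \<Inter>(insert (topspace ?X) (K ` (G \<times> G)))"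
    using assms PiE_mem[of _ I E] unfolding K_def by auto
  ultimately show ?thesis by simp
qed

lemma csp_compactness:
  assumes fin: "\<And>i. i \<in> I \<Longrightarrow> finite {t. P i t}"
    and solvable: "\<And>G. finite G \<Longrightarrow> G \<subseteq> I \<Longrightarrow> \<exists>w. csp_solution G P R w"
  shows "\<exists>w. csp_solution I P R w"
proof -
  define X where "X = product_topology (\<lambda>i. discrete_topology {t. P i t}) I"
  define C where "C G = {w \<in> topspace X. \<forall>i\<in>G. \<forall>j\<in>G. R i j (w i) (w j)}" for G
  have nonempty: "C G \<noteq> {}" if G: "finite G" "G \<subseteq> I" for G
  proof -
    obtain w where w: "csp_solution G P R w"
      using solvable G by blast
    have "\<exists>t. P i t" if "i \<in> I" for i
      using solvable[of "{i}"] that by (auto simp: csp_solution_def)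
    then have "(\<lambda>i. if i \<in> I then if i \<in> G then w i else (SOME t. P i t) else undefined) \<in> C G"
      using w G(2)
      by (auto simp: C_def X_def csp_solution_def PiE_iff extensional_def intro: someI_ex)
    then show ?thesis by blast
  qed
  have "\<Inter>\<F> \<noteq> {}" if \<F>: "finite \<F>" "\<F> \<subseteq> C ` {G. finite G \<and> G \<subseteq> I}" for \<F>
  proof -
    obtain \<G> where \<G>: "\<G> \<subseteq> {G. finite G \<and> G \<subseteq> I}" "finite \<G>" "\<F> = C ` \<G>"
      using \<F> by (meson finite_subset_image)
    then have "C (\<Union>\<G>) \<subseteq> \<Inter>\<F>"
      by (auto simp: C_def)
    moreover have "C (\<Union>\<G>) \<noteq> {}"
      using \<G> by (intro nonempty) auto
    ultimately show ?thesis by blast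
  qed
  moreover have "compact_space X"
    unfolding X_def compact_space_product_topology using fin
    by (simp add: compact_space_discrete_topology)
  moreover have "closedin X (C G)" if "G \<subseteq> I" for G
    unfolding X_def C_def using that by (rule closedin_pairwise_constraints)
  ultimately have "\<Inter>(C ` {G. finite G \<and> G \<subseteq> I}) \<noteq> {}"
    using compact_space_fip[THEN iffD1, rule_format, of X "C ` {G. finite G \<and> G \<subseteq> I}"]
    by blast
  then obtain w where w: "\<And>G. finite G \<Longrightarrow> G \<subseteq> I \<Longrightarrow> w \<in> C G"
    by blast
  have "P i (w i)" if "i \<in> I" for i
    using w[of "{}"] that by (auto simp: C_def X_def PiE_iff)
  moreover have "R i j (w i) (w j)" if "i \<in> I" "j \<in> I" for i j
    using w[of "{i, j}"] that by (simp add: C_def)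
  ultimately show ?thesis
    unfolding csp_solution_def by blast
qed

definition equidiv_witness :: "('v, 'e) sgd \<Rightarrow> 'e \<Rightarrow> 'e \<Rightarrow> 'e \<Rightarrow> 'e \<Rightarrow> 'e \<Rightarrow> bool" where
  "equidiv_witness S u v x y t \<longleftrightarrow> t \<in> edges S \<and> alpha S u = omega S t \<and> sgd.mult S u t = x
     \<and> alpha S t = omega S y \<and> v = sgd.mult S t y"

lemma equidivisibleD:
  assumes "equidivisible S"
    and "u \<in> edges S" "v \<in> edges S" "x \<in> edges S" "y \<in> edges S"
    and "alpha S u = omega S v" "alpha S x = omega S y" "sgd.mult S u v = sgd.mult S x y"
  shows "(u = x \<and> v = y) \<or> (\<exists>t. equidiv_witness S u v x y t \<or> equidiv_witness S x y u v t)"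
  using assms(1)[unfolded equidivisible_def, rule_format, OF assms(2-8)]
  by (auto simp: sgdI_def equidiv_witness_def)

lemma equidivisibleI:
  assumes "\<And>u v x y. u \<in> edges S \<Longrightarrow> v \<in> edges S \<Longrightarrow> x \<in> edges S \<Longrightarrow> y \<in> edges S \<Longrightarrow>
      alpha S u = omega S v \<Longrightarrow> alpha S x = omega S y \<Longrightarrow> sgd.mult S u v = sgd.mult S x y \<Longrightarrow>
      (u = x \<and> v = y \<and> alpha S u \<in> verts S)
      \<or> (\<exists>t. equidiv_witness S u v x y t \<or> equidiv_witness S x y u v t)"
  shows "equidivisible S"
  unfolding equidivisible_def
proof (intro ballI impI, goal_cases)
  case (1 u v x y)
  from assms[OF 1] show ?case
  proof (elim disjE exE conjE)
    assume "u = x" "v = y" "alpha S u \<in> verts S"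
    then show ?thesis
      using 1 by (intro bexI[of _ "Inr (alpha S u)"]) (auto simp: sgdI_def)
  qed (force simp: sgdI_def equidiv_witness_def)+
qed

lemma pseudovariety_finite_sgd: "pseudovariety V \<Longrightarrow> T \<in> V \<Longrightarrow> finite_sgd T"
  unfolding pseudovariety_def by blast

lemma sgd_hom_id: "sgd_hom S S id id"
  unfolding sgd_hom_def graph_hom_def by simp

text \<open>The maps of an index are arbitrary outside \<open>A\<close>; only their values on \<open>A\<close> matter.\<close>

definition idx_agree :: "('v, 'e) graph \<Rightarrow> ('v, 'e) idx \<Rightarrow> ('v, 'e) idx \<Rightarrow> bool" where
  "idx_agree A i j \<longleftrightarrow> fst i = fst j \<and> (\<forall>a\<in>verts A. fst (snd i) a = fst (snd j) a)
     \<and> (\<forall>e\<in>edges A. snd (snd i) e = snd (snd j) e)"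

lemma idx_agree_sym: "idx_agree A i j \<Longrightarrow> idx_agree A j i"
  by (simp add: idx_agree_def)

lemma compatible_idx_agree:
  assumes "idx_agree A i i'" "idx_agree A j j'" "compatible A i j h k"
  shows "compatible A i' j' h k"
  using assms by (auto simp: idx_agree_def compatible_def split: prod.splits)

lemma lim_edges_coherent:
  "w \<in> lim_edges V A \<Longrightarrow> i \<in> pv_index V A \<Longrightarrow> j \<in> pv_index V A \<Longrightarrow> compatible A i j h k
    \<Longrightarrow> k (w i) = w j"
  unfolding lim_edges_def by blast

lemma lim_edges_idx_agree:
  assumes "w \<in> lim_edges V A" "i \<in> pv_index V A" "j \<in> pv_index V A" "idx_agree A i j"
  shows "w i = w j"
proof -
  have "compatible A i j id id"
    using assms(4) sgd_hom_id by (auto simp: idx_agree_def compatible_def split: prod.splits)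
  from lim_edges_coherent[OF assms(1-3) this] show ?thesis by simp
qed

definition coherent :: "('v, 'e) graph \<Rightarrow> ('v, 'e) idx \<Rightarrow> ('v, 'e) idx \<Rightarrow> nat \<Rightarrow> nat \<Rightarrow> bool" where
  "coherent A i j s t \<longleftrightarrow> (\<forall>h k. compatible A i j h k \<longrightarrow> k s = t)"

definition local_witness :: "('v, 'e) graph \<Rightarrow> ('v, 'e) idx set
     \<Rightarrow> (('v, 'e) idx \<Rightarrow> nat) \<Rightarrow> (('v, 'e) idx \<Rightarrow> nat) \<Rightarrow> (('v, 'e) idx \<Rightarrow> nat)
     \<Rightarrow> (('v, 'e) idx \<Rightarrow> nat) \<Rightarrow> (('v, 'e) idx \<Rightarrow> nat) \<Rightarrow> bool" where
  "local_witness A G u v x y w \<longleftrightarrow>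
     csp_solution G (\<lambda>i. equidiv_witness (fst i) (u i) (v i) (x i) (y i)) (coherent A) w"

lemma local_witness_antimono:
  "G \<subseteq> G' \<Longrightarrow> local_witness A G' u v x y w \<Longrightarrow> local_witness A G u v x y w"
  unfolding local_witness_def csp_solution_def by blast

lemma equidiv_witness_free_pro:
  assumes "local_witness A (pv_index V A) u v x y w" "v \<in> lim_edges V A" "x \<in> lim_edges V A"
  shows "equidiv_witness (free_pro V A) u v x y (restrict w (pv_index V A))"
  using assms
  by (auto simp: local_witness_def csp_solution_def equidiv_witness_def coherent_def
      free_pro_def lim_edges_def fun_eq_iff)

lemma equidiv_witness_free_pro_component:
  assumes "equidiv_witness (free_pro V A) u v x y t" "i \<in> pv_index V A"
  shows "equidiv_witness (fst i) (u i) (v i) (x i) (y i) (t i)"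
proof -
  have "t \<in> lim_edges V A"
    and "alpha (free_pro V A) u i = omega (free_pro V A) t i"
    and "sgd.mult (free_pro V A) u t i = x i"
    and "alpha (free_pro V A) t i = omega (free_pro V A) y i"
    and "v i = sgd.mult (free_pro V A) t y i"
    using assms(1) by (simp_all add: equidiv_witness_def free_pro_def)
  then show ?thesis
    using assms(2) by (auto simp: equidiv_witness_def free_pro_def lim_edges_def)
qed

lemma free_pro_alpha_in_verts:
  assumes "pseudovariety V" "u \<in> edges (free_pro V A)"
  shows "alpha (free_pro V A) u \<in> verts (free_pro V A)"
proof -
  have alpha_in: "alpha (fst i) (u i) \<in> verts (fst i)" if "i \<in> pv_index V A" for i
  proof -
    have "is_graph (fst i)"
      using that pseudovariety_finite_sgd[OF assms(1)]
      by (auto simp: pv_index_def finite_sgd_def is_sgd_def)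
    moreover have "u i \<in> edges (fst i)"
      using that assms(2) by (simp add: free_pro_def lim_edges_def)
    ultimately show ?thesis by (simp add: is_graph_def)
  qed
  have "h (alpha (fst i) (u i)) = alpha (fst j) (u j)"
    if "i \<in> pv_index V A" "j \<in> pv_index V A" "compatible A i j h k" for i j h k
  proof -
    have "k (u i) = u j" "u i \<in> edges (fst i)"
      using that assms(2) by (simp_all add: free_pro_def lim_edges_def)
    moreover have "sgd_hom (fst i) (fst j) h k"
      using that(3) by (simp add: compatible_def split: prod.splits)
    ultimately show ?thesis
      by (auto simp: sgd_hom_def graph_hom_def)
  qed
  then show ?thesis
    using alpha_in by (auto simp: free_pro_def lim_verts_def)
qed

definition idx_pullback :: "('a \<Rightarrow> 'c) \<Rightarrow> ('b \<Rightarrow> 'd) \<Rightarrow> ('c, 'd) idx \<Rightarrow> ('a, 'b) idx" where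
  "idx_pullback p1 p2 = (\<lambda>(T, f, g). (T, f \<circ> p1, g \<circ> p2))"

definition free_pro_map :: "(nat, nat) sgd set \<Rightarrow> ('c, 'd) graph \<Rightarrow> ('a \<Rightarrow> 'c) \<Rightarrow> ('b \<Rightarrow> 'd)
     \<Rightarrow> (('a, 'b) idx \<Rightarrow> nat) \<Rightarrow> ('c, 'd) idx \<Rightarrow> nat" where
  "free_pro_map V B p1 p2 w =
     (\<lambda>j. if j \<in> pv_index V B then w (idx_pullback p1 p2 j) else undefined)"

lemma fst_idx_pullback [simp]: "fst (idx_pullback p1 p2 j) = fst j"
  by (simp add: idx_pullback_def split: prod.splits)

lemma idx_pullback_pv_index:
  "graph_hom A B p1 p2 \<Longrightarrow> j \<in> pv_index V B \<Longrightarrow> idx_pullback p1 p2 j \<in> pv_index V A"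
  by (auto simp: idx_pullback_def pv_index_def graph_hom_def)

lemma compatible_idx_pullback:
  "graph_hom A B p1 p2 \<Longrightarrow> compatible B i j h k
    \<Longrightarrow> compatible A (idx_pullback p1 p2 i) (idx_pullback p1 p2 j) h k"
  by (auto simp: idx_pullback_def compatible_def graph_hom_def split: prod.splits)

lemma compatible_of_idx_pullback:
  assumes "p1 ` verts A = verts B" "p2 ` edges A = edges B"
    and "compatible A (idx_pullback p1 p2 i) (idx_pullback p1 p2 j) h k"
  shows "compatible B i j h k"
  using assms(3)
  by (auto simp: idx_pullback_def compatible_def assms(1,2)[symmetric] split: prod.splits)

lemma free_pro_map_lim_edges:
  assumes "graph_hom A B p1 p2" "w \<in> lim_edges V A"
  shows "free_pro_map V B p1 p2 w \<in> lim_edges V B"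
proof -
  have "w (idx_pullback p1 p2 j) \<in> edges (fst j)" if "j \<in> pv_index V B" for j
    using assms(2) idx_pullback_pv_index[OF assms(1) that] by (auto simp: lim_edges_def)
  moreover have "k (w (idx_pullback p1 p2 i)) = w (idx_pullback p1 p2 j)"
    if "i \<in> pv_index V B" "j \<in> pv_index V B" "compatible B i j h k" for i j h k
    using assms(2) idx_pullback_pv_index[OF assms(1) that(1)] idx_pullback_pv_index[OF assms(1) that(2)]
      compatible_idx_pullback[OF assms(1) that(3)]
    by (auto simp: lim_edges_def)
  ultimately show ?thesis
    by (simp add: lim_edges_def free_pro_map_def)
qed

lemma free_pro_map_structure:
  assumes "graph_hom A B p1 p2"
  shows "alpha (free_pro V B) (free_pro_map V B p1 p2 w)
      = free_pro_map V B p1 p2 (alpha (free_pro V A) w)"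
    and "omega (free_pro V B) (free_pro_map V B p1 p2 w)
      = free_pro_map V B p1 p2 (omega (free_pro V A) w)"
    and "sgd.mult (free_pro V B) (free_pro_map V B p1 p2 w) (free_pro_map V B p1 p2 w')
      = free_pro_map V B p1 p2 (sgd.mult (free_pro V A) w w')"
  using idx_pullback_pv_index[OF assms]
  by (auto simp: free_pro_def free_pro_map_def idx_pullback_def fun_eq_iff split: prod.splits)

lemma factoring_index_map:
  fixes A :: "('a, 'b) graph" and B :: "('c, 'd) graph"
  assumes hom: "graph_hom A B p1 p2"
    and onto: "p1 ` verts A = verts B" "p2 ` edges A = edges B"
    and G: "G \<subseteq> pv_index V A"
    and factors: "\<forall>i\<in>G. \<exists>j\<in>pv_index V B. idx_agree A (idx_pullback p1 p2 j) i"
  obtains \<sigma> where "\<And>i. i \<in> G \<Longrightarrow> \<sigma> i \<in> pv_index V B \<and> fst (\<sigma> i) = fst i"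
    and "\<And>z i. z \<in> lim_edges V A \<Longrightarrow> i \<in> G \<Longrightarrow> free_pro_map V B p1 p2 z (\<sigma> i) = z i"
    and "\<And>i j h k. i \<in> G \<Longrightarrow> j \<in> G \<Longrightarrow> compatible A i j h k \<Longrightarrow> compatible B (\<sigma> i) (\<sigma> j) h k"
proof -
  obtain \<sigma> where "\<forall>i\<in>G. \<sigma> i \<in> pv_index V B \<and> idx_agree A (idx_pullback p1 p2 (\<sigma> i)) i"
    using bchoice[OF factors[unfolded Bex_def]] by blast
  then have \<sigma>: "\<And>i. i \<in> G \<Longrightarrow> \<sigma> i \<in> pv_index V B"
    and agree: "\<And>i. i \<in> G \<Longrightarrow> idx_agree A (idx_pullback p1 p2 (\<sigma> i)) i"
    by blast+
  show thesis
  proof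
    show "\<sigma> i \<in> pv_index V B \<and> fst (\<sigma> i) = fst i" if "i \<in> G" for i
      using \<sigma>[OF that] agree[OF that] by (simp add: idx_agree_def)
    show "free_pro_map V B p1 p2 z (\<sigma> i) = z i" if "z \<in> lim_edges V A" "i \<in> G" for z i
    proof -
      have "free_pro_map V B p1 p2 z (\<sigma> i) = z (idx_pullback p1 p2 (\<sigma> i))"
        using \<sigma>[OF that(2)] by (simp add: free_pro_map_def)
      also have "\<dots> = z i"
        using that G
        by (intro lim_edges_idx_agree[OF that(1) idx_pullback_pv_index[OF hom \<sigma>] _ agree]) auto
      finally show ?thesis .
    qed
    show "compatible B (\<sigma> i) (\<sigma> j) h k" if "i \<in> G" "j \<in> G" "compatible A i j h k" for i j h k
      using compatible_idx_agree[OF idx_agree_sym[OF agree[OF that(1)]]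
          idx_agree_sym[OF agree[OF that(2)]] that(3)]
      by (rule compatible_of_idx_pullback[OF onto])
  qed
qed

lemma local_witness_of_free_pro_witness:
  assumes wit: "equidiv_witness (free_pro V B) u' v' x' y' t"
    and \<sigma>: "\<And>i. i \<in> G \<Longrightarrow> \<sigma> i \<in> pv_index V B \<and> fst (\<sigma> i) = fst i"
    and evaluated: "\<And>i. i \<in> G \<Longrightarrow> u' (\<sigma> i) = u i \<and> v' (\<sigma> i) = v i \<and> x' (\<sigma> i) = x i \<and> y' (\<sigma> i) = y i"
    and compatible: "\<And>i j h k. i \<in> G \<Longrightarrow> j \<in> G \<Longrightarrow> compatible A i j h k
      \<Longrightarrow> compatible B (\<sigma> i) (\<sigma> j) h k"
  shows "local_witness A G u v x y (t \<circ> \<sigma>)"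
  unfolding local_witness_def csp_solution_def
proof (intro conjI ballI)
  fix i assume i: "i \<in> G"
  show "equidiv_witness (fst i) (u i) (v i) (x i) (y i) ((t \<circ> \<sigma>) i)"
    using equidiv_witness_free_pro_component[OF wit conjunct1[OF \<sigma>[OF i]]] \<sigma>[OF i] evaluated[OF i]
    by simp
next
  fix i j assume i: "i \<in> G" and j: "j \<in> G"
  have "t \<in> lim_edges V B"
    using wit by (simp add: equidiv_witness_def free_pro_def)
  from lim_edges_coherent[OF this conjunct1[OF \<sigma>[OF i]] conjunct1[OF \<sigma>[OF j]] compatible[OF i j]]
  show "coherent A i j ((t \<circ> \<sigma>) i) ((t \<circ> \<sigma>) j)"
    unfolding coherent_def comp_def by blast
qed

lemma free_pro_local_equidivisibility:
  fixes A :: "('a, 'b) graph" and B :: "('c, 'd) graph"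
  assumes hom: "graph_hom A B p1 p2"
    and onto: "p1 ` verts A = verts B" "p2 ` edges A = edges B"
    and equidiv: "equidivisible (free_pro V B)"
    and G: "G \<subseteq> pv_index V A"
    and factors: "\<forall>i\<in>G. \<exists>j\<in>pv_index V B. idx_agree A (idx_pullback p1 p2 j) i"
    and lim: "u \<in> lim_edges V A" "v \<in> lim_edges V A" "x \<in> lim_edges V A" "y \<in> lim_edges V A"
    and eqs: "alpha (free_pro V A) u = omega (free_pro V A) v"
      "alpha (free_pro V A) x = omega (free_pro V A) y"
      "sgd.mult (free_pro V A) u v = sgd.mult (free_pro V A) x y"
  shows "(\<forall>i\<in>G. u i = x i \<and> v i = y i)
    \<or> (\<exists>w. local_witness A G u v x y w) \<or> (\<exists>w. local_witness A G x y u v w)"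
proof -
  obtain \<sigma> where \<sigma>: "\<And>i. i \<in> G \<Longrightarrow> \<sigma> i \<in> pv_index V B \<and> fst (\<sigma> i) = fst i"
    and eval: "\<And>z i. z \<in> lim_edges V A \<Longrightarrow> i \<in> G \<Longrightarrow> free_pro_map V B p1 p2 z (\<sigma> i) = z i"
    and compatible: "\<And>i j h k. i \<in> G \<Longrightarrow> j \<in> G \<Longrightarrow> compatible A i j h k
      \<Longrightarrow> compatible B (\<sigma> i) (\<sigma> j) h k"
    using factoring_index_map[OF hom onto G factors] by blast
  let ?p = "free_pro_map V B p1 p2"
  have pushed: "?p z \<in> edges (free_pro V B)" if "z \<in> lim_edges V A" for z
    using free_pro_map_lim_edges[OF hom that] by (simp add: free_pro_def)
  have "(?p u = ?p x \<and> ?p v = ?p y)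
      \<or> (\<exists>t. equidiv_witness (free_pro V B) (?p u) (?p v) (?p x) (?p y) t
          \<or> equidiv_witness (free_pro V B) (?p x) (?p y) (?p u) (?p v) t)"
    using equidivisibleD[OF equidiv pushed[OF lim(1)] pushed[OF lim(2)] pushed[OF lim(3)]
        pushed[OF lim(4)]]
    by (simp add: free_pro_map_structure[OF hom] eqs)
  then show ?thesis
  proof (elim disjE exE)
    assume "?p u = ?p x \<and> ?p v = ?p y"
    then show ?thesis
      using eval[OF lim(1)] eval[OF lim(2)] eval[OF lim(3)] eval[OF lim(4)] by metis
  next
    fix t assume "equidiv_witness (free_pro V B) (?p u) (?p v) (?p x) (?p y) t"
    from local_witness_of_free_pro_witness[OF this \<sigma> _ compatible] show ?thesis
      using eval lim by blast
  next
    fix t assume "equidiv_witness (free_pro V B) (?p x) (?p y) (?p u) (?p v) t"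
    from local_witness_of_free_pro_witness[OF this \<sigma> _ compatible] show ?thesis
      using eval lim by blast
  qed
qed

lemma finite_subsets_one_of_three:
  assumes "\<And>G. finite G \<Longrightarrow> G \<subseteq> I \<Longrightarrow> P G \<or> Q G \<or> R G"
    and "\<And>G G'. G \<subseteq> G' \<Longrightarrow> P G' \<Longrightarrow> P G"
    and "\<And>G G'. G \<subseteq> G' \<Longrightarrow> Q G' \<Longrightarrow> Q G"
    and "\<And>G G'. G \<subseteq> G' \<Longrightarrow> R G' \<Longrightarrow> R G"
  shows "(\<forall>G. finite G \<and> G \<subseteq> I \<longrightarrow> P G) \<or> (\<forall>G. finite G \<and> G \<subseteq> I \<longrightarrow> Q G)
    \<or> (\<forall>G. finite G \<and> G \<subseteq> I \<longrightarrow> R G)"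
proof (rule ccontr)
  assume "\<not> ?thesis"
  then obtain G1 G2 G3 where G: "finite G1" "G1 \<subseteq> I" "finite G2" "G2 \<subseteq> I" "finite G3" "G3 \<subseteq> I"
    and "\<not> P G1" "\<not> Q G2" "\<not> R G3"
    by blast
  moreover have "P (G1 \<union> G2 \<union> G3) \<or> Q (G1 \<union> G2 \<union> G3) \<or> R (G1 \<union> G2 \<union> G3)"
    using G by (intro assms(1)) auto
  ultimately show False
    using assms(2)[of G1 "G1 \<union> G2 \<union> G3"] assms(3)[of G2 "G1 \<union> G2 \<union> G3"]
      assms(4)[of G3 "G1 \<union> G2 \<union> G3"]
    by blast
qed

lemma equidiv_witness_free_pro_of_local:
  assumes "pseudovariety V"
    and "\<And>G. finite G \<Longrightarrow> G \<subseteq> pv_index V A \<Longrightarrow> \<exists>w. local_witness A G u v x y w"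
    and "v \<in> lim_edges V A" "x \<in> lim_edges V A"
  shows "\<exists>t. equidiv_witness (free_pro V A) u v x y t"
proof -
  have "finite {t. equidiv_witness (fst i) (u i) (v i) (x i) (y i) t}" if "i \<in> pv_index V A" for i
  proof (rule finite_subset)
    show "finite (edges (fst i))"
      using that pseudovariety_finite_sgd[OF assms(1)] by (auto simp: pv_index_def finite_sgd_def)
  qed (auto simp: equidiv_witness_def)
  from csp_compactness[OF this assms(2)[unfolded local_witness_def]]
  have "\<exists>w. local_witness A (pv_index V A) u v x y w"
    unfolding local_witness_def .
  then show ?thesis
    using equidiv_witness_free_pro assms(3,4) by blast
qed

lemma lim_edges_eqI:
  assumes "u \<in> lim_edges V A" "x \<in> lim_edges V A" "\<And>i. i \<in> pv_index V A \<Longrightarrow> u i = x i"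
  shows "u = x"
proof
  fix i show "u i = x i"
    using assms by (cases "i \<in> pv_index V A"; cases i) (auto simp: lim_edges_def)
qed

lemma equidivisible_free_pro_if_local_quotients:
  fixes A :: "('a, 'b) graph"
  assumes V: "pseudovariety V"
    and quotients: "\<And>G. finite G \<Longrightarrow> G \<subseteq> pv_index V A \<Longrightarrow> \<exists>(B :: ('c, 'd) graph) p1 p2.
      equidivisible (free_pro V B) \<and> graph_hom A B p1 p2
      \<and> p1 ` verts A = verts B \<and> p2 ` edges A = edges B
      \<and> (\<forall>i\<in>G. \<exists>j\<in>pv_index V B. idx_agree A (idx_pullback p1 p2 j) i)"
  shows "equidivisible (free_pro V A)"
proof (rule equidivisibleI)
  fix u v x y
  assume edges: "u \<in> edges (free_pro V A)" "v \<in> edges (free_pro V A)"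
    "x \<in> edges (free_pro V A)" "y \<in> edges (free_pro V A)"
    and eqs: "alpha (free_pro V A) u = omega (free_pro V A) v"
      "alpha (free_pro V A) x = omega (free_pro V A) y"
      "sgd.mult (free_pro V A) u v = sgd.mult (free_pro V A) x y"
  then have lim: "u \<in> lim_edges V A" "v \<in> lim_edges V A" "x \<in> lim_edges V A" "y \<in> lim_edges V A"
    by (simp_all add: free_pro_def)
  have "(\<forall>i\<in>G. u i = x i \<and> v i = y i)
    \<or> (\<exists>w. local_witness A G u v x y w) \<or> (\<exists>w. local_witness A G x y u v w)"
    if G: "finite G" "G \<subseteq> pv_index V A" for G
  proof -
    obtain B :: "('c, 'd) graph" and p1 p2 where "equidivisible (free_pro V B)"
      "graph_hom A B p1 p2" "p1 ` verts A = verts B" "p2 ` edges A = edges B"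
      "\<forall>i\<in>G. \<exists>j\<in>pv_index V B. idx_agree A (idx_pullback p1 p2 j) i"
      using quotients[OF G] by blast
    from free_pro_local_equidivisibility[OF this(2,3,4,1) G(2) this(5) lim eqs] show ?thesis .
  qed
  then have "(\<forall>G. finite G \<and> G \<subseteq> pv_index V A \<longrightarrow> (\<forall>i\<in>G. u i = x i \<and> v i = y i))
    \<or> (\<forall>G. finite G \<and> G \<subseteq> pv_index V A \<longrightarrow> (\<exists>w. local_witness A G u v x y w))
    \<or> (\<forall>G. finite G \<and> G \<subseteq> pv_index V A \<longrightarrow> (\<exists>w. local_witness A G x y u v w))"
    by (rule finite_subsets_one_of_three) (blast dest: local_witness_antimono)+
  then show "(u = x \<and> v = y \<and> alpha (free_pro V A) u \<in> verts (free_pro V A))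
    \<or> (\<exists>t. equidiv_witness (free_pro V A) u v x y t \<or> equidiv_witness (free_pro V A) x y u v t)"
  proof (elim disjE)
    assume equal: "\<forall>G. finite G \<and> G \<subseteq> pv_index V A \<longrightarrow> (\<forall>i\<in>G. u i = x i \<and> v i = y i)"
    have "u i = x i \<and> v i = y i" if "i \<in> pv_index V A" for i
      using equal[rule_format, of "{i}"] that by simp
    then have "u = x" "v = y"
      using lim_edges_eqI[OF lim(1,3)] lim_edges_eqI[OF lim(2,4)] by blast+
    then show ?thesis
      using free_pro_alpha_in_verts[OF V edges(1)] by blast
  next
    assume "\<forall>G. finite G \<and> G \<subseteq> pv_index V A \<longrightarrow> (\<exists>w. local_witness A G u v x y w)"
    then have "\<exists>t. equidiv_witness (free_pro V A) u v x y t"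
      by (intro equidiv_witness_free_pro_of_local[OF V _ lim(2,3)]) blast
    then show ?thesis by blast
  next
    assume "\<forall>G. finite G \<and> G \<subseteq> pv_index V A \<longrightarrow> (\<exists>w. local_witness A G x y u v w)"
    then have "\<exists>t. equidiv_witness (free_pro V A) x y u v t"
      by (intro equidiv_witness_free_pro_of_local[OF V _ lim(4,1)]) blast
    then show ?thesis by blast
  qed
qed

lemma graph_hom_comp:
  "graph_hom A B f g \<Longrightarrow> graph_hom B C f' g' \<Longrightarrow> graph_hom A C (f' \<circ> f) (g' \<circ> g)"
  unfolding graph_hom_def by auto

lemma sgd_hom_comp:
  "sgd_hom S T h k \<Longrightarrow> sgd_hom T U h' k' \<Longrightarrow> sgd_hom S U (h' \<circ> h) (k' \<circ> k)"
  unfolding sgd_hom_def graph_hom_def by auto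

lemma compatible_comp:
  "compatible A i j h k \<Longrightarrow> compatible A j l h' k' \<Longrightarrow> compatible A i l (h' \<circ> h) (k' \<circ> k)"
  by (auto simp: compatible_def intro: sgd_hom_comp split: prod.splits)

lemma sgd_hom_fst: "sgd_hom (sgd_prod S T) S fst fst"
  and sgd_hom_snd: "sgd_hom (sgd_prod S T) T snd snd"
  by (auto simp: sgd_hom_def graph_hom_def sgd_prod_def)

lemma graph_hom_pair:
  "graph_hom A S f g \<Longrightarrow> graph_hom A T f' g'
    \<Longrightarrow> graph_hom A (sgd_prod S T) (\<lambda>a. (f a, f' a)) (\<lambda>e. (g e, g' e))"
  by (auto simp: graph_hom_def sgd_prod_def)

lemma graph_hom_inv_into:
  assumes "is_graph S" "sgd_hom S T \<phi> \<psi>"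
    and "bij_betw \<phi> (verts S) (verts T)" "bij_betw \<psi> (edges S) (edges T)"
  shows "graph_hom T S (inv_into (verts S) \<phi>) (inv_into (edges S) \<psi>)"
  unfolding graph_hom_def
proof (intro conjI ballI)
  fix e' assume "e' \<in> edges T"
  then obtain e where e: "e \<in> edges S" "e' = \<psi> e"
    using assms(4) by (auto simp: bij_betw_def)
  have "alpha S e \<in> verts S" "omega S e \<in> verts S"
    using assms(1) e(1) by (auto simp: is_graph_def)
  moreover have "alpha T e' = \<phi> (alpha S e)" "omega T e' = \<phi> (omega S e)"
    using assms(2) e by (auto simp: sgd_hom_def graph_hom_def)
  ultimately show "inv_into (edges S) \<psi> e' \<in> edges S"
    and "alpha S (inv_into (edges S) \<psi> e') = inv_into (verts S) \<phi> (alpha T e')"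
    and "omega S (inv_into (edges S) \<psi> e') = inv_into (verts S) \<phi> (omega T e')"
    using e assms(3,4) by (simp_all add: bij_betw_inv_into_left)
qed (use assms(3) in \<open>auto simp: bij_betw_def intro: inv_into_into\<close>)

lemma pv_index_nonempty:
  assumes "pseudovariety V"
  shows "pv_index V A \<noteq> {}"
proof -
  obtain P where P: "P \<in> V" "sgd_iso P sgd_trivial"
    using assms unfolding pseudovariety_def by blast
  then have "card (verts P) = 1" "card (edges P) = 1"
    by (auto simp: sgd_iso_def sgd_trivial_def dest!: bij_betw_same_card)
  then obtain p e where pe: "verts P = {p}" "edges P = {e}"
    by (metis card_1_singletonE)
  moreover have "is_graph P"
    using pseudovariety_finite_sgd[OF assms P(1)] by (simp add: finite_sgd_def is_sgd_def)
  ultimately have "graph_hom A P (\<lambda>_. p) (\<lambda>_. e)"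
    by (simp add: graph_hom_def is_graph_def)
  then show ?thesis
    using P(1) by (auto simp: pv_index_def)
qed

lemma pv_index_refine_pair:
  assumes V: "pseudovariety V" and "i \<in> pv_index V A" "i' \<in> pv_index V A"
  shows "\<exists>j\<in>pv_index V A. (\<exists>h k. compatible A j i h k) \<and> (\<exists>h k. compatible A j i' h k)"
proof -
  obtain T1 f1 g1 T2 f2 g2 where i: "i = (T1, f1, g1)" and i': "i' = (T2, f2, g2)"
    by (metis prod_cases3)
  have i1: "(T1, f1, g1) \<in> pv_index V A" and i2: "(T2, f2, g2) \<in> pv_index V A"
    using assms(2,3) i i' by simp_all
  obtain P where P: "P \<in> V" "sgd_iso P (sgd_prod T1 T2)"
    using V i1 i2 unfolding pseudovariety_def pv_index_def by blast
  then obtain \<phi> \<psi> where hom: "sgd_hom P (sgd_prod T1 T2) \<phi> \<psi>"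
    and bij: "bij_betw \<phi> (verts P) (verts T1 \<times> verts T2)" "bij_betw \<psi> (edges P) (edges T1 \<times> edges T2)"
    unfolding sgd_iso_def by (auto simp: sgd_prod_def)
  have "is_graph P"
    using pseudovariety_finite_sgd[OF V P(1)] by (simp add: finite_sgd_def is_sgd_def)
  define F where "F = inv_into (verts P) \<phi> \<circ> (\<lambda>a. (f1 a, f2 a))"
  define H where "H = inv_into (edges P) \<psi> \<circ> (\<lambda>e. (g1 e, g2 e))"
  have pair: "graph_hom A (sgd_prod T1 T2) (\<lambda>a. (f1 a, f2 a)) (\<lambda>e. (g1 e, g2 e))"
    using i1 i2 by (intro graph_hom_pair) (auto simp: pv_index_def)
  have "graph_hom A P F H"
    unfolding F_def H_def
    by (rule graph_hom_comp[OF pair graph_hom_inv_into[OF \<open>is_graph P\<close> hom]])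
      (use bij in \<open>simp_all add: sgd_prod_def\<close>)
  then have j: "(P, F, H) \<in> pv_index V A"
    using P(1) by (simp add: pv_index_def)
  have \<phi>F: "\<phi> (F a) = (f1 a, f2 a)" if "a \<in> verts A" for a
    using pair that bij(1) by (auto simp: F_def graph_hom_def sgd_prod_def bij_betw_inv_into_right)
  have \<psi>H: "\<psi> (H e) = (g1 e, g2 e)" if "e \<in> edges A" for e
    using pair that bij(2) by (auto simp: H_def graph_hom_def sgd_prod_def bij_betw_inv_into_right)
  have "compatible A (P, F, H) (T1, f1, g1) (fst \<circ> \<phi>) (fst \<circ> \<psi>)"
    using sgd_hom_comp[OF hom sgd_hom_fst] \<phi>F \<psi>H by (simp add: compatible_def)
  moreover have "compatible A (P, F, H) (T2, f2, g2) (snd \<circ> \<phi>) (snd \<circ> \<psi>)"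
    using sgd_hom_comp[OF hom sgd_hom_snd] \<phi>F \<psi>H by (simp add: compatible_def)
  ultimately show ?thesis
    using j i i' by blast
qed

lemma pv_index_refine_finite:
  assumes V: "pseudovariety V" and "finite G" "G \<subseteq> pv_index V A"
  shows "\<exists>j\<in>pv_index V A. \<forall>i\<in>G. \<exists>h k. compatible A j i h k"
  using assms(2,3)
proof (induction G rule: finite_induct)
  case empty
  then show ?case
    using pv_index_nonempty[OF V] by blast
next
  case (insert i G)
  then obtain j where j: "j \<in> pv_index V A" and refines: "\<forall>i'\<in>G. \<exists>h k. compatible A j i' h k"
    by blast
  obtain l where l: "l \<in> pv_index V A" and lj: "\<exists>h k. compatible A l j h k"
    and li: "\<exists>h k. compatible A l i h k"
    using pv_index_refine_pair[OF V j, of i] insert.prems by blast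
  have "\<exists>h k. compatible A l i' h k" if "i' \<in> G" for i'
    using lj refines that compatible_comp by blast
  then show ?case
    using l li by blast
qed

definition image_graph :: "('w, 'f, 'm) graph_scheme \<Rightarrow> ('v \<Rightarrow> 'w) \<Rightarrow> ('e \<Rightarrow> 'f)
     \<Rightarrow> ('v, 'e) graph \<Rightarrow> ('w, 'f) graph" where
  "image_graph T f g A =
     \<lparr>verts = f ` verts A, edges = g ` edges A, alpha = alpha T, omega = omega T\<rparr>"

lemma graph_hom_image_graph: "graph_hom A T f g \<Longrightarrow> graph_hom A (image_graph T f g A) f g"
  by (simp add: graph_hom_def image_graph_def)

lemma is_graph_image_graph: "graph_hom A T f g \<Longrightarrow> is_graph A \<Longrightarrow> is_graph (image_graph T f g A)"
  by (auto simp: graph_hom_def is_graph_def image_graph_def)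

lemma compatible_factors_through_image_graph:
  assumes "graph_hom A P fP gP" "compatible A (P, fP, gP) i h k" "i \<in> pv_index V A"
  shows "(fst i, h, k) \<in> pv_index V (image_graph P fP gP A)"
    and "idx_agree A (idx_pullback fP gP (fst i, h, k)) i"
proof -
  obtain T f g where i: "i = (T, f, g)"
    by (metis prod_cases3)
  have agree: "\<forall>a\<in>verts A. h (fP a) = f a" "\<forall>e\<in>edges A. k (gP e) = g e"
    using assms(2) i by (simp_all add: compatible_def)
  have "sgd_hom P T h k"
    using assms(2) i by (simp add: compatible_def)
  with assms(1) have "graph_hom (image_graph P fP gP A) T h k"
    by (auto simp: graph_hom_def sgd_hom_def image_graph_def)
  then show "(fst i, h, k) \<in> pv_index V (image_graph P fP gP A)"
    using assms(3) i by (simp add: pv_index_def)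
  show "idx_agree A (idx_pullback fP gP (fst i, h, k)) i"
    using agree i
    by (simp add: idx_agree_def idx_pullback_def)
qed

lemma equidivisible_free_pro_if_equidivisible_pv:
  fixes A :: "('a, 'b) graph"
  assumes V: "pseudovariety V" and equidiv: "equidivisible_pv V" and A: "is_graph A"
  shows "equidivisible (free_pro V A)"
proof (rule equidivisible_free_pro_if_local_quotients[OF V])
  fix G assume "finite G" "G \<subseteq> pv_index V A"
  then obtain P fP gP where j: "(P, fP, gP) \<in> pv_index V A"
    and refines: "\<forall>i\<in>G. \<exists>h k. compatible A (P, fP, gP) i h k"
    using pv_index_refine_finite[OF V] by (metis prod_cases3)
  let ?B = "image_graph P fP gP A"
  have hom: "graph_hom A P fP gP" and "finite_sgd P"
    using j pseudovariety_finite_sgd[OF V] by (auto simp: pv_index_def)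
  then have "finite (verts ?B)" "finite (edges ?B)"
    by (auto simp: image_graph_def graph_hom_def finite_sgd_def intro: finite_subset)
  then have "equidivisible (free_pro V ?B)"
    using equidiv is_graph_image_graph[OF hom A] by (simp add: equidivisible_pv_def)
  moreover have "\<forall>i\<in>G. \<exists>j\<in>pv_index V ?B. idx_agree A (idx_pullback fP gP j) i"
    using refines compatible_factors_through_image_graph[OF hom] \<open>G \<subseteq> pv_index V A\<close> by blast
  moreover have "fP ` verts A = verts ?B" "gP ` edges A = edges ?B"
    by (simp_all add: image_graph_def)
  ultimately show "\<exists>(B :: (nat, nat) graph) p1 p2. equidivisible (free_pro V B) \<and> graph_hom A B p1 p2
      \<and> p1 ` verts A = verts B \<and> p2 ` edges A = edges B
      \<and> (\<forall>i\<in>G. \<exists>j\<in>pv_index V B. idx_agree A (idx_pullback p1 p2 j) i)"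
    using graph_hom_image_graph[OF hom] by blast
qed

lemma graph_hom_inv_into_graph_iso:
  assumes A: "is_graph A" and hom: "graph_hom A B p1 p2"
    and inj: "inj_on p1 (verts A)" "inj_on p2 (edges A)"
    and onto: "p1 ` verts A = verts B" "p2 ` edges A = edges B"
    and T: "graph_hom A T f g"
  shows "graph_hom B T (f \<circ> inv_into (verts A) p1) (g \<circ> inv_into (edges A) p2)"
  unfolding graph_hom_def
proof (intro conjI ballI)
  fix v assume "v \<in> verts B"
  then obtain a where "a \<in> verts A" "v = p1 a"
    using onto(1) by blast
  then show "(f \<circ> inv_into (verts A) p1) v \<in> verts T"
    using inj(1) T by (simp add: graph_hom_def)
next
  fix e' assume "e' \<in> edges B"
  then obtain e where e: "e \<in> edges A" "e' = p2 e"
    using onto(2) by blast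
  moreover have "alpha A e \<in> verts A" "omega A e \<in> verts A"
    using A e(1) by (auto simp: is_graph_def)
  ultimately show "(g \<circ> inv_into (edges A) p2) e' \<in> edges T"
    and "alpha T ((g \<circ> inv_into (edges A) p2) e') = (f \<circ> inv_into (verts A) p1) (alpha B e')"
    and "omega T ((g \<circ> inv_into (edges A) p2) e') = (f \<circ> inv_into (verts A) p1) (omega B e')"
    using hom inj T by (auto simp: graph_hom_def)
qed

lemma equidivisible_free_pro_graph_iso:
  fixes A :: "('a, 'b) graph" and B :: "('c, 'd) graph"
  assumes V: "pseudovariety V" and equidiv: "equidivisible (free_pro V B)" and A: "is_graph A"
    and hom: "graph_hom A B p1 p2" and inj: "inj_on p1 (verts A)" "inj_on p2 (edges A)"
    and onto: "p1 ` verts A = verts B" "p2 ` edges A = edges B"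
  shows "equidivisible (free_pro V A)"
proof (rule equidivisible_free_pro_if_local_quotients[OF V])
  fix G assume "G \<subseteq> pv_index V A"
  have "\<exists>j\<in>pv_index V B. idx_agree A (idx_pullback p1 p2 j) i" if "i \<in> pv_index V A" for i
  proof -
    obtain T f g where i: "i = (T, f, g)"
      by (metis prod_cases3)
    let ?j = "(T, f \<circ> inv_into (verts A) p1, g \<circ> inv_into (edges A) p2)"
    have "T \<in> V" "graph_hom A T f g"
      using that by (simp_all add: i pv_index_def)
    then have "?j \<in> pv_index V B"
      using graph_hom_inv_into_graph_iso[OF A hom inj onto] by (simp add: pv_index_def)
    moreover have "idx_agree A (idx_pullback p1 p2 ?j) i"
      using inj by (simp add: i idx_agree_def idx_pullback_def)
    ultimately show ?thesis ..
  qed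
  then have "\<forall>i\<in>G. \<exists>j\<in>pv_index V B. idx_agree A (idx_pullback p1 p2 j) i"
    using \<open>G \<subseteq> pv_index V A\<close> by blast
  then show "\<exists>(B :: ('c, 'd) graph) p1 p2. equidivisible (free_pro V B) \<and> graph_hom A B p1 p2
      \<and> p1 ` verts A = verts B \<and> p2 ` edges A = edges B
      \<and> (\<forall>i\<in>G. \<exists>j\<in>pv_index V B. idx_agree A (idx_pullback p1 p2 j) i)"
    using equidiv hom onto by blast
qed

definition copy_graph :: "('v \<Rightarrow> 'w) \<Rightarrow> ('e \<Rightarrow> 'f) \<Rightarrow> ('v, 'e) graph \<Rightarrow> ('w, 'f) graph" where
  "copy_graph p1 p2 A = \<lparr>verts = p1 ` verts A, edges = p2 ` edges A,
     alpha = p1 \<circ> alpha A \<circ> inv p2, omega = p1 \<circ> omega A \<circ> inv p2\<rparr>"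

lemma graph_hom_copy_graph: "inj p2 \<Longrightarrow> graph_hom A (copy_graph p1 p2 A) p1 p2"
  by (simp add: graph_hom_def copy_graph_def)

lemma is_graph_copy_graph: "inj p2 \<Longrightarrow> is_graph A \<Longrightarrow> is_graph (copy_graph p1 p2 A)"
  by (auto simp: is_graph_def copy_graph_def)

lemma equidivisible_pv_if_infinite_carriers:
  fixes V :: "(nat, nat) sgd set"
  assumes V: "pseudovariety V"
    and "infinite (UNIV :: 'v set)" "infinite (UNIV :: 'e set)"
    and copies: "\<forall>A :: ('v, 'e) graph. is_graph A \<and> finite (verts A) \<longrightarrow> equidivisible (free_pro V A)"
  shows "equidivisible_pv V"
  unfolding equidivisible_pv_def
proof (intro allI impI)
  obtain p1 :: "nat \<Rightarrow> 'v" where p1: "inj p1"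
    using infinite_countable_subset[OF assms(2)] by blast
  obtain p2 :: "nat \<Rightarrow> 'e" where p2: "inj p2"
    using infinite_countable_subset[OF assms(3)] by blast
  fix A :: "(nat, nat) graph"
  assume A: "is_graph A \<and> finite (verts A) \<and> finite (edges A)"
  then have "is_graph (copy_graph p1 p2 A)" "finite (verts (copy_graph p1 p2 A))"
    by (simp_all add: is_graph_copy_graph[OF p2]) (simp add: copy_graph_def)
  then have copy: "equidivisible (free_pro V (copy_graph p1 p2 A))"
    using copies by blast
  show "equidivisible (free_pro V A)"
    by (rule equidivisible_free_pro_graph_iso[OF V copy _ graph_hom_copy_graph[OF p2]])
      (use A p1 p2 in \<open>auto simp: copy_graph_def intro: inj_on_subset[of _ UNIV]\<close>)
qed

theorem mainTheorem9:
  fixes V :: "(nat, nat) sgd set"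
  assumes "pseudovariety V"
    and "infinite (UNIV :: 'v set)"
    and "infinite (UNIV :: 'e set)"
  shows "equidivisible_pv V \<longleftrightarrow>
    (\<forall>A :: ('v, 'e) graph. is_graph A \<and> finite (verts A)
        \<longrightarrow> equidivisible (free_pro V A))"
proof
  assume "equidivisible_pv V"
  then show "\<forall>A :: ('v, 'e) graph. is_graph A \<and> finite (verts A) \<longrightarrow> equidivisible (free_pro V A)"
    using equidivisible_free_pro_if_equidivisible_pv[OF assms(1)] by blast
next
  assume "\<forall>A :: ('v, 'e) graph. is_graph A \<and> finite (verts A) \<longrightarrow> equidivisible (free_pro V A)"
  then show "equidivisible_pv V"
    by (rule equidivisible_pv_if_infinite_carriers[OF assms])
qed

end
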